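(* Let $(G,G_+,\Sigma)$ be a scaled ordered abelian group such that $(G,G_+)$ is weakly unperforated, and suppose that $n\,\hat{\cdot}\,\Sigma=G_+$ for some $n\in\mathbb{N}$. Then $\Sigma=G_+$.
   Context: A scaled ordered abelian group is a triple $(G,G_+,\Sigma)$ where $(G,G_+)$ is an ordered abelian group and $\Sigma\subseteq G_+$ satisfies: (i) for all $x_1,x_2\in\Sigma$ there is $x\in\Sigma$ with $x_1\le x$, $x_2\le x$; (ii) if $x\in G_+$, $y\in\Sigma$ and $x\le y$ then $x\in\Sigma$; (iii) for every $x\in G_+$ there are $y\in\Sigma$ and $k\in\mathbb{N}$ with $x\le ky$. For such $\Sigma$, $n\,\hat{\cdot}\,\Sigma$ denotes the set of $y\in G_+$ such that $0\le y\le nx$ for some $x\in\Sigma$. An ordered abelian group $(G,G_+)$ is weakly unperforated if (i) whenever $x\in G$, $m\in\mathbb{N}$ and $mx\in G_+$, there is a torsion element $t$ with $x+t\in G_+$ and $mt=0$; and (ii) whenever $y\in G_+$, $t$ is torsion, $n\in\mathbb{N}$ and $ny+t\in G_+$, then $y\pm t\in G_+$. *)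

theory Defs
  imports Main
begin

fun nsmul :: "nat \<Rightarrow> 'a::monoid_add \<Rightarrow> 'a" where
  "nsmul 0 x = 0"
| "nsmul (Suc n) x = x + nsmul n x"

definition ordered_ab_group :: "'a::ab_group_add set \<Rightarrow> bool" where
  "ordered_ab_group Gp \<longleftrightarrow> 0 \<in> Gp \<and> (\<forall>x\<in>Gp. \<forall>y\<in>Gp. x + y \<in> Gp)
     \<and> (\<forall>x. x \<in> Gp \<and> - x \<in> Gp \<longrightarrow> x = 0)"

definition ole :: "'a::ab_group_add set \<Rightarrow> 'a \<Rightarrow> 'a \<Rightarrow> bool" where
  "ole Gp x y \<longleftrightarrow> y - x \<in> Gp"

definition scale :: "'a::ab_group_add set \<Rightarrow> 'a set \<Rightarrow> bool" where
  "scale Gp S \<longleftrightarrow> S \<subseteq> Gp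
     \<and> (\<forall>x1\<in>S. \<forall>x2\<in>S. \<exists>x\<in>S. ole Gp x1 x \<and> ole Gp x2 x)
     \<and> (\<forall>x\<in>Gp. \<forall>y\<in>S. ole Gp x y \<longrightarrow> x \<in> S)
     \<and> (\<forall>x\<in>Gp. \<exists>y\<in>S. \<exists>k::nat. k \<ge> 1 \<and> ole Gp x (nsmul k y))"

definition scaled_ordered_ab_group :: "'a::ab_group_add set \<Rightarrow> 'a set \<Rightarrow> bool" where
  "scaled_ordered_ab_group Gp S \<longleftrightarrow> ordered_ab_group Gp \<and> scale Gp S"

definition torsion :: "'a::ab_group_add \<Rightarrow> bool" where
  "torsion t \<longleftrightarrow> (\<exists>k::nat. k \<ge> 1 \<and> nsmul k t = 0)"

definition weakly_unperforated :: "'a::ab_group_add set \<Rightarrow> bool" where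
  "weakly_unperforated Gp \<longleftrightarrow>
     (\<forall>x (m::nat). m \<ge> 1 \<and> nsmul m x \<in> Gp \<longrightarrow>
        (\<exists>t. torsion t \<and> x + t \<in> Gp \<and> nsmul m t = 0))
   \<and> (\<forall>y t (n::nat). y \<in> Gp \<and> torsion t \<and> n \<ge> 1 \<and> nsmul n y + t \<in> Gp \<longrightarrow>
        y + t \<in> Gp \<and> y - t \<in> Gp)"

definition mult_scale :: "'a::ab_group_add set \<Rightarrow> nat \<Rightarrow> 'a set \<Rightarrow> 'a set" where
  "mult_scale Gp n S = {y \<in> Gp. \<exists>x\<in>S. ole Gp y (nsmul n x)}"

end

theory Submission
  imports Defs
begin

text \<open>
  Weak unperforation lets us cancel the factor n in n y \<le> n x, at the price of a
  torsion error: x - y + t \<ge> 0 for some torsion t with t \<le> x. Given y \<in> G+,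
  pick x1 \<in> \<Sigma> with n y \<le> n x1, and then x2 \<in> \<Sigma> above x1 with n x2 \<ge> 2n x1,
  so that u = x2 - x1 satisfies n u \<ge> n x1. Then t \<le> x1 forces t \<le> u: cancelling
  n in n x1 \<le> n u with a second torsion error t' gives 2u - t \<ge> 0, and
  weak unperforation removes the 2. Hence x2 - y = (x1 - y + t) + (u - t) \<ge> 0, and
  y \<in> \<Sigma> because \<Sigma> is hereditary.
\<close>

lemma nsmul_add: "nsmul n (a + b) = nsmul n a + nsmul n (b::'a::ab_group_add)"
  by (induction n) (simp_all add: algebra_simps)

lemma nsmul_neg: "nsmul n (- a) = - nsmul n (a::'a::ab_group_add)"
  by (induction n) (simp_all add: algebra_simps)

lemma nsmul_diff: "nsmul n (a - b) = nsmul n a - nsmul n (b::'a::ab_group_add)"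
  using nsmul_add[of n a "- b"] nsmul_neg[of n b] by simp

lemma nsmul_2: "nsmul 2 a = a + (a::'a::ab_group_add)"
  by (simp add: numeral_2_eq_2)

lemma torsion_neg: "torsion t \<Longrightarrow> torsion (- t)"
  unfolding torsion_def by (metis nsmul_neg neg_equal_0_iff_equal)

lemma ordered_ab_group_add_closed:
  "ordered_ab_group Gp \<Longrightarrow> x \<in> Gp \<Longrightarrow> y \<in> Gp \<Longrightarrow> x + y \<in> Gp"
  by (simp add: ordered_ab_group_def)

lemma ordered_ab_group_nsmul_closed:
  "ordered_ab_group Gp \<Longrightarrow> x \<in> Gp \<Longrightarrow> nsmul n x \<in> Gp"
  by (induction n) (auto simp: ordered_ab_group_def)

lemma weakly_unperforatedD:
  assumes "weakly_unperforated Gp" "n \<ge> 1"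
  shows "nsmul n x \<in> Gp \<Longrightarrow> \<exists>t. torsion t \<and> x + t \<in> Gp \<and> nsmul n t = 0"
    and "y \<in> Gp \<Longrightarrow> torsion t \<Longrightarrow> nsmul n y + t \<in> Gp \<Longrightarrow> y + t \<in> Gp \<and> y - t \<in> Gp"
  using assms unfolding weakly_unperforated_def by blast+

lemma weakly_unperforated_cancel_nsmul:
  assumes "ordered_ab_group Gp" "weakly_unperforated Gp" "n \<ge> 1"
    and "x \<in> Gp" "y \<in> Gp" "nsmul n (x - y) \<in> Gp"
  obtains t where "torsion t" "x - y + t \<in> Gp" "x - t \<in> Gp"
proof -
  obtain t where t: "torsion t" "x - y + t \<in> Gp"
    using weakly_unperforatedD(1)[OF assms(2,3,6)] by blast
  have "x + t = (x - y + t) + y" by simp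
  then have "x + t \<in> Gp"
    using ordered_ab_group_add_closed[OF assms(1) t(2) assms(5)] by simp
  then have "x - t \<in> Gp"
    using weakly_unperforatedD(2)[OF assms(2), of 1, OF _ assms(4) t(1)] by simp
  with t that show thesis by blast
qed

lemma weakly_unperforated_torsion_le_trans:
  assumes og: "ordered_ab_group Gp" and wu: "weakly_unperforated Gp" and "n \<ge> 1"
    and "x \<in> Gp" "u \<in> Gp" "nsmul n (u - x) \<in> Gp"
    and t: "torsion t" "x - t \<in> Gp"
  shows "u - t \<in> Gp"
proof -
  obtain t' where t': "u - x + t' \<in> Gp" "u - t' \<in> Gp"
    using weakly_unperforated_cancel_nsmul[OF og wu assms(3,5,4,6)] by blast
  have "(u - x + t') + (x - t) + (u - t') = nsmul 2 u + - t"
    by (simp add: nsmul_2 algebra_simps)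
  moreover have "(u - x + t') + (x - t) + (u - t') \<in> Gp"
    using t' t(2) ordered_ab_group_add_closed[OF og] by blast
  ultimately have "nsmul 2 u + - t \<in> Gp" by metis
  then show ?thesis
    using weakly_unperforatedD(2)[OF wu, of 2, OF _ \<open>u \<in> Gp\<close> torsion_neg[OF t(1)]] by simp
qed

lemma mult_scale_eq_dominates:
  assumes "mult_scale Gp n S = Gp" "y \<in> Gp"
  obtains x where "x \<in> S" "nsmul n x - y \<in> Gp"
  using assms unfolding mult_scale_def ole_def by blast

lemma mult_scale_eq_double:
  assumes og: "ordered_ab_group Gp" and sc: "scale Gp S"
    and full: "mult_scale Gp n S = Gp" and "x \<in> S"
  obtains z where "z \<in> S" "z - x \<in> Gp" "nsmul n (z - x - x) \<in> Gp"
proof -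
  have "x + x \<in> Gp"
    using sc \<open>x \<in> S\<close> ordered_ab_group_add_closed[OF og] unfolding scale_def by blast
  then obtain z' where z': "z' \<in> S" "nsmul n z' - nsmul n (x + x) \<in> Gp"
    using mult_scale_eq_dominates[OF full ordered_ab_group_nsmul_closed[OF og]] by blast
  obtain z where z: "z \<in> S" "z - z' \<in> Gp" "z - x \<in> Gp"
    using sc z'(1) \<open>x \<in> S\<close> unfolding scale_def ole_def by blast
  have "nsmul n (z - z') + (nsmul n z' - nsmul n (x + x)) = nsmul n (z - x - x)"
    by (simp add: nsmul_diff nsmul_add)
  moreover have "nsmul n (z - z') + (nsmul n z' - nsmul n (x + x)) \<in> Gp"
    using ordered_ab_group_nsmul_closed[OF og z(2)] z'(2) by (rule ordered_ab_group_add_closed[OF og])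
  ultimately show thesis using that z(1,3) by simp
qed

theorem proposition1p10:
  fixes Gp S :: "'a::ab_group_add set" and n :: nat
  assumes "scaled_ordered_ab_group Gp S"
    and "weakly_unperforated Gp"
    and "n \<ge> 1"
    and "mult_scale Gp n S = Gp"
  shows "S = Gp"
proof
  have og: "ordered_ab_group Gp" and sc: "scale Gp S"
    using assms(1) by (auto simp: scaled_ordered_ab_group_def)
  then show "S \<subseteq> Gp" by (simp add: scale_def)
  show "Gp \<subseteq> S"
  proof
    fix y assume y: "y \<in> Gp"
    obtain x1 where x1: "x1 \<in> S" "nsmul n x1 - nsmul n y \<in> Gp"
      using mult_scale_eq_dominates[OF assms(4) ordered_ab_group_nsmul_closed[OF og y]] by blast
    have x1_pos: "x1 \<in> Gp" using sc x1(1) by (auto simp: scale_def)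
    obtain t where t: "torsion t" "x1 - y + t \<in> Gp" "x1 - t \<in> Gp"
      using weakly_unperforated_cancel_nsmul[OF og assms(2,3) x1_pos y] x1(2) by (auto simp: nsmul_diff)
    obtain x2 where x2: "x2 \<in> S" "x2 - x1 \<in> Gp" "nsmul n (x2 - x1 - x1) \<in> Gp"
      using mult_scale_eq_double[OF og sc assms(4) x1(1)] by blast
    have "x2 - x1 - t \<in> Gp"
      using weakly_unperforated_torsion_le_trans[OF og assms(2,3) x1_pos x2(2) _ t(1,3)] x2(3) by simp
    moreover have "x2 - y = (x1 - y + t) + (x2 - x1 - t)" by simp
    ultimately have "x2 - y \<in> Gp"
      using ordered_ab_group_add_closed[OF og t(2)] by metis
    then show "y \<in> S" using sc x2(1) y by (auto simp: scale_def ole_def)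
  qed
qed

end
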